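(* Let $a_2,a_3$ be integers with $1<a_2<a_3$ and $A=\{1,a_2,a_3\}$. Then $h_2\le h_0$.
   Context: An integer $x$ has an $h$-representation if $x=c_3a_3+c_2a_2+c_1$ with integers $c_1,c_2,c_3\ge0$ and $c_1+c_2+c_3\le h$. $X(h)$ is one less than the smallest positive integer with no $h$-representation. $h_0$ is the smallest $h$ with $X(h)\ge a_3$; $h_1$ is the smallest $h$ such that $X(h'+1)=X(h')+a_3$ for all $h'\ge h$; $h_2$ is the smallest $h\ge h_1$ such that for all $h'\ge h$ and all integers $x$ with $X(h')<x<h'a_3$: $x$ has no $h'$-representation if and only if $x+a_3$ has no $(h'+1)$-representation. *)

theory Defs
  imports Main
begin

definition hrep :: "int \<Rightarrow> int \<Rightarrow> nat \<Rightarrow> int \<Rightarrow> bool" where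
  "hrep a2 a3 h x \<longleftrightarrow> (\<exists>c1 c2 c3 :: nat.
     x = int c3 * a3 + int c2 * a2 + int c1 \<and> c1 + c2 + c3 \<le> h)"

definition Xh :: "int \<Rightarrow> int \<Rightarrow> nat \<Rightarrow> int" where
  "Xh a2 a3 h = (LEAST n::int. n > 0 \<and> \<not> hrep a2 a3 h n) - 1"

definition h0 :: "int \<Rightarrow> int \<Rightarrow> nat" where
  "h0 a2 a3 = (LEAST h. Xh a2 a3 h \<ge> a3)"

definition P1 :: "int \<Rightarrow> int \<Rightarrow> nat \<Rightarrow> bool" where
  "P1 a2 a3 h \<longleftrightarrow> (\<forall>h'\<ge>h. Xh a2 a3 (h' + 1) = Xh a2 a3 h' + a3)"

definition h1 :: "int \<Rightarrow> int \<Rightarrow> nat" where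
  "h1 a2 a3 = (LEAST h. P1 a2 a3 h)"

definition P2 :: "int \<Rightarrow> int \<Rightarrow> nat \<Rightarrow> bool" where
  "P2 a2 a3 h \<longleftrightarrow> h \<ge> h1 a2 a3 \<and>
     (\<forall>h'\<ge>h. \<forall>x::int. Xh a2 a3 h' < x \<and> x < int h' * a3 \<longrightarrow>
        (\<not> hrep a2 a3 h' x \<longleftrightarrow> \<not> hrep a2 a3 (h' + 1) (x + a3)))"

definition h2 :: "int \<Rightarrow> int \<Rightarrow> nat" where
  "h2 a2 a3 = (LEAST h. P2 a2 a3 h)"

end

theory Submission
  imports Defs
begin

text \<open>Let \<open>q = a3 div a2\<close>. The key fact is that once \<open>h \<ge> q + a2 - 2\<close>, removing one \<open>a3\<close>
from an \<open>(h+1)\<close>-representation of \<open>y \<ge> a3\<close> leaves an \<open>h\<close>-representation of \<open>y - a3\<close>. This is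
only nontrivial when the representation of \<open>y\<close> uses no \<open>a3\<close>, i.e. \<open>y = i a2 + z\<close> with \<open>i + z \<le> h + 1\<close>;
one then trades part of it for \<open>k a3\<close> with \<open>k a3 \<le> y\<close>, choosing \<open>k\<close> so that the residue
\<open>k a3 mod a2\<close> is small, and when no such \<open>k\<close> exists the Farey neighbours of
\<open>(a3 mod a2) / a2\<close> give a cheap enough exchange. Consequently, beyond that threshold the
\<open>(h+1)\<close>-representable numbers are those up to \<open>X(h)\<close> together with the \<open>a3\<close>-shifts of the
\<open>h\<close>-representable ones, which yields both \<open>X(h+1) = X(h) + a3\<close> (once \<open>X(h) \<ge> a3\<close>) and the shift
equivalence defining \<open>h2\<close>. Finally \<open>X(h0) \<ge> a3\<close> means \<open>q a2 - 1\<close> is \<open>h0\<close>-representable, which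
needs at least \<open>q + a2 - 2\<close> summands, so \<open>h0\<close> already lies beyond the threshold.\<close>

lemma hrep_intI:
  fixes c1 c2 c3 :: int
  assumes "0 \<le> c1" "0 \<le> c2" "0 \<le> c3" "c1 + c2 + c3 \<le> int h" "x = c3 * a3 + c2 * a2 + c1"
  shows "hrep a2 a3 h x"
  unfolding hrep_def
  by (rule exI[of _ "nat c1"], rule exI[of _ "nat c2"], rule exI[of _ "nat c3"]) (use assms in auto)

lemma hrepE:
  assumes "hrep a2 a3 h x"
  obtains c1 c2 c3 :: int where "0 \<le> c1" "0 \<le> c2" "0 \<le> c3" "c1 + c2 + c3 \<le> int h"
    "x = c3 * a3 + c2 * a2 + c1"
proof -
  from assms obtain n1 n2 n3 :: nat where "x = int n3 * a3 + int n2 * a2 + int n1" "n1 + n2 + n3 \<le> h"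
    unfolding hrep_def by blast
  then show ?thesis using that[of "int n1" "int n2" "int n3"] by simp
qed

lemma hrep_mono:
  assumes "hrep a2 a3 h x" "h \<le> h'"
  shows "hrep a2 a3 h' x"
  using assms unfolding hrep_def by (metis le_trans)

lemma hrep_Suc_add:
  assumes "hrep a2 a3 h x"
  shows "hrep a2 a3 (Suc h) (x + a3)"
proof -
  obtain c1 c2 c3 :: int where c: "0 \<le> c1" "0 \<le> c2" "0 \<le> c3" "c1 + c2 + c3 \<le> int h"
    "x = c3 * a3 + c2 * a2 + c1" using hrepE[OF assms] by blast
  show ?thesis
    by (rule hrep_intI[of c1 c2 "c3 + 1"]) (use c in \<open>auto simp: algebra_simps\<close>)
qed

lemma hrep_of_le:
  fixes n :: int
  assumes "0 \<le> n" "n \<le> int h"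
  shows "hrep a2 a3 h n"
  by (rule hrep_intI[of n 0 0]) (use assms in auto)

lemma hrep_le:
  assumes "1 \<le> a2" "a2 \<le> a3" "hrep a2 a3 h x"
  shows "x \<le> int h * a3"
proof -
  obtain c1 c2 c3 :: int where c: "0 \<le> c1" "0 \<le> c2" "0 \<le> c3" "c1 + c2 + c3 \<le> int h"
    "x = c3 * a3 + c2 * a2 + c1" using hrepE[OF assms(3)] by blast
  have "c2 * a2 \<le> c2 * a3" using c assms by (intro mult_left_mono) auto
  moreover have "c1 * 1 \<le> c1 * a3" using c assms by (intro mult_left_mono) auto
  moreover have "(c1 + c2 + c3) * a3 \<le> int h * a3" using c assms by (intro mult_right_mono) auto
  ultimately show ?thesis using c by (simp add: algebra_simps)
qed

text \<open>With \<open>U = k1 r div a + 1\<close> and \<open>D = k2 r div a\<close> this says \<open>U k2 - D k1 = 1\<close>: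
the fractions \<open>D / k2 \<le> r / a < U / k1\<close> are Farey neighbours.\<close>

definition farey_pair :: "int \<Rightarrow> int \<Rightarrow> int \<Rightarrow> int \<Rightarrow> bool" where
  "farey_pair a r k1 k2 \<longleftrightarrow> (a - (k1 * r) mod a) * k2 + ((k2 * r) mod a) * k1 = a"

lemma farey_pair_mediant:
  assumes a: "0 < a" and pair: "farey_pair a r k1 k2" and nz: "((k1 + k2) * r) mod a \<noteq> 0"
  shows "farey_pair a r (k1 + k2) k2 \<or> farey_pair a r k1 (k1 + k2)"
proof -
  define H where "H = (k1 * r) mod a"
  define L where "L = (k2 * r) mod a"
  have H: "0 \<le> H" "H < a" and L: "0 \<le> L" "L < a" using a by (auto simp: H_def L_def)
  have res: "((k1 + k2) * r) mod a = (H + L) mod a"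
    unfolding H_def L_def by (simp add: mod_add_eq distrib_right)
  have det: "(a - H) * k2 + L * k1 = a" using pair by (simp add: farey_pair_def H_def L_def)
  consider "H + L < a" | "a < H + L" using nz res H L by fastforce
  then show ?thesis
  proof cases
    case 1
    then have "((k1 + k2) * r) mod a = H + L" using res H L by simp
    then have "farey_pair a r (k1 + k2) k2"
      unfolding farey_pair_def L_def[symmetric] using det by (simp add: algebra_simps)
    then show ?thesis ..
  next
    case 2
    have "(H + L) mod a = (H + L - a) mod a" using mod_add_self2[of "H + L - a" a] by simp
    also have "\<dots> = H + L - a" using 2 H L by (intro mod_pos_pos_trivial) auto
    finally have mod_sum: "((k1 + k2) * r) mod a = H + L - a" using res by simp
    have "farey_pair a r k1 (k1 + k2)"
      unfolding farey_pair_def H_def[symmetric] mod_sum using det by (simp add: algebra_simps)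
    then show ?thesis ..
  qed
qed

lemma farey_neighbours:
  fixes a r :: int and K :: nat
  assumes a: "0 < a" and K: "1 \<le> K"
    and nz: "\<forall>k::nat. 1 \<le> k \<and> k \<le> K \<longrightarrow> (int k * r) mod a \<noteq> 0"
  shows "\<exists>k1 k2::nat. 1 \<le> k1 \<and> k1 \<le> K \<and> 1 \<le> k2 \<and> k2 \<le> K \<and> K < k1 + k2 \<and>
    farey_pair a r (int k1) (int k2)"
  using K nz
proof (induction K rule: nat_induct_at_least)
  case base
  show ?case by (rule exI[of _ 1], rule exI[of _ 1]) (simp add: farey_pair_def algebra_simps)
next
  case (Suc n)
  then obtain k1 k2 :: nat where k: "1 \<le> k1" "k1 \<le> n" "1 \<le> k2" "k2 \<le> n" "n < k1 + k2"
    and pair: "farey_pair a r (int k1) (int k2)" by auto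
  show ?case
  proof (cases "Suc n < k1 + k2")
    case True
    then show ?thesis using k pair by (intro exI[of _ k1] exI[of _ k2]) auto
  next
    case False
    then have n: "Suc n = k1 + k2" using k by auto
    have "((int k1 + int k2) * r) mod a \<noteq> 0"
      using Suc.prems[rule_format, of "Suc n"] n by simp
    then have "farey_pair a r (int (Suc n)) (int k2) \<or> farey_pair a r (int k1) (int (Suc n))"
      using farey_pair_mediant[OF a pair] n by simp
    then show ?thesis
    proof
      assume "farey_pair a r (int (Suc n)) (int k2)"
      then show ?thesis using k n by (intro exI[of _ "Suc n"] exI[of _ k2]) auto
    next
      assume "farey_pair a r (int k1) (int (Suc n))"
      then show ?thesis using k n by (intro exI[of _ k1] exI[of _ "Suc n"]) auto
    qed
  qed
qed

lemma farey_pair_quotients: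
  assumes a: "0 < a" and pair: "farey_pair a r k1 k2"
  shows "((k1 * r) div a + 1) * k2 = 1 + ((k2 * r) div a) * k1"
proof -
  have "a * (((k1 * r) div a + 1) * k2 - ((k2 * r) div a) * k1)
      = (a - (k1 * r) mod a) * k2 + ((k2 * r) mod a) * k1"
    by (simp add: minus_div_mult_eq_mod[symmetric] algebra_simps)
  also have "\<dots> = a * 1" using pair by (simp add: farey_pair_def)
  finally show ?thesis using a by simp
qed

lemma hrep_sub_of_multiple:
  fixes a b y c1 c2 k :: int
  assumes a: "0 < a" and k: "1 \<le> k" and kb: "k * b \<le> y" and y: "y - k * b = c2 * a + c1"
    and c1: "0 \<le> c1" "c1 < a" and count: "c1 + c2 + (k - 1) \<le> int h"
  shows "hrep a b h (y - b)"
proof (rule hrep_intI[of c1 c2 "k - 1"])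
  show "0 \<le> c2"
  proof (rule ccontr)
    assume "\<not> 0 \<le> c2"
    then have "c2 * a \<le> -1 * a" using a by (intro mult_right_mono) auto
    then show False using y kb c1 by simp
  qed
qed (use k c1 count y in \<open>auto simp: algebra_simps\<close>)

lemma hrep_sub_small_residue:
  fixes a b q r i z k :: int
  assumes a: "0 < a" and b: "b = q * a + r" and r: "0 \<le> r" and q: "1 \<le> q"
    and z: "z < a" and iz: "i + z \<le> int h + 1"
    and k: "1 \<le> k" and kb: "k * b \<le> i * a + z" and small: "(k * r) mod a \<le> z"
  shows "hrep a b h (i * a + z - b)"
proof (rule hrep_sub_of_multiple[OF a k kb])
  define d where "d = (k * r) div a"
  define m where "m = (k * r) mod a"
  have "d * a + m = k * r" unfolding d_def m_def by simp
  then show "i * a + z - k * b = (i - k * q - d) * a + (z - m)"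
    unfolding b by (simp add: algebra_simps)
  show "0 \<le> z - m" "z - m < a" using small z pos_mod_sign[OF a, of "k * r"] by (auto simp: m_def)
  have "0 \<le> d" using a k r by (simp add: d_def pos_imp_zdiv_nonneg_iff)
  moreover have "k \<le> k * q" using k q by (simp add: mult_le_cancel_left1)
  moreover have "0 \<le> m" using a by (simp add: m_def)
  ultimately show "z - m + (i - k * q - d) + (k - 1) \<le> int h" using iz by linarith
qed

lemma unimodular_coeff_le:
  fixes k1 k2 u v :: int
  assumes k1: "1 \<le> k1" and k2: "1 \<le> k2" and uv: "u * k2 = 1 + v * k1"
    and u: "1 \<le> u" and v: "0 \<le> v"
    and k1_one: "k1 = 1 \<Longrightarrow> u = 1" and k2_one: "k2 = 1 \<Longrightarrow> v = 0"
  shows "u \<le> (k1 - 1) * v + 1"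
proof (cases "k1 = 1 \<or> v = 0")
  case True
  moreover have "u * 1 \<le> u * k2" using u k2 by (intro mult_left_mono) auto
  ultimately show ?thesis using k1_one uv by auto
next
  case False
  then have "k2 \<noteq> 1" using k2_one by auto
  with False k1 k2 have "2 \<le> k1" "2 \<le> k2" by auto
  then have "u * 2 \<le> u * k2" using u by (intro mult_left_mono) auto
  moreover have "0 \<le> v * (k1 - 2)" using v \<open>2 \<le> k1\<close> by simp
  ultimately have "2 * u \<le> 2 * ((k1 - 1) * v + 1)" using uv by (simp add: algebra_simps)
  then show ?thesis by simp
qed

text \<open>In the application \<open>N = (k1 + k2) q + u + v\<close> satisfies \<open>N a + L - g = (k1 + k2) b\<close>, so
\<open>below\<close> is the bound \<open>y < (k1 + k2) b\<close> on \<open>y = i a + z\<close>.\<close>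

lemma farey_exchange_count:
  fixes a g L k1 k2 u v q i z :: int
  assumes k1: "1 \<le> k1" and k2: "1 \<le> k2" and g: "1 \<le> g" and L: "1 \<le> L" "L < a"
    and q: "1 \<le> q" and z: "0 \<le> z" "z < L" and h: "q + a - 2 \<le> int h"
    and det: "g * k2 + L * k1 = a" and uv: "u * k2 = 1 + v * k1" and u: "1 \<le> u" and v: "0 \<le> v"
    and k1_one: "k1 = 1 \<Longrightarrow> u = 1" and k2_one: "k2 = 1 \<Longrightarrow> v = 0"
    and expensive: "k1 * (q - 1) + u < g"
    and below: "(i - ((k1 + k2) * q + u + v)) * a < L - g - z"
  shows "z + g + (i - k1 * q - u) + (k1 - 1) \<le> int h"
proof -
  define N where "N = (k1 + k2) * q + u + v"
  have p1: "(k1 * (q - 1) + u + 1) * (k2 - 1) \<le> g * (k2 - 1)"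
    using expensive k2 by (intro mult_right_mono) auto
  have p2: "0 \<le> (k2 - 1) * (k1 - 1) * (q - 1)" using k1 k2 q by simp
  have p3: "(k1 - 1) * v \<le> (k1 - 1) * (v + L - 1)" using k1 L by (intro mult_left_mono) auto
  have "a + 1 - (g + L + k1 + (k2 - 1) * q + v)
      = g * (k2 - 1) + L * (k1 - 1) + 1 - k1 - (k2 - 1) * q - v"
    using det by (simp add: algebra_simps)
  also have "\<dots> \<ge> (k1 * (q - 1) + u + 1) * (k2 - 1) + L * (k1 - 1) + 1 - k1 - (k2 - 1) * q - v"
    using p1 by simp
  also have "(k1 * (q - 1) + u + 1) * (k2 - 1) + L * (k1 - 1) + 1 - k1 - (k2 - 1) * q - v
      = (k2 - 1) * (k1 - 1) * (q - 1) + (k1 - 1) * (v + L - 1) + 1 - u"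
    using uv by (simp add: algebra_simps)
  finally have cost: "g + L + k1 + (k2 - 1) * q + v \<le> a + 1"
    using p2 p3 unimodular_coeff_le[OF k1 k2 uv u v k1_one k2_one] by linarith
  have "i \<le> N"
  proof (rule ccontr)
    assume "\<not> i \<le> N"
    then have "1 * a \<le> (i - N) * a" using L by (intro mult_right_mono) auto
    then show False using below g L z unfolding N_def by linarith
  qed
  then have "i < N \<or> i = N \<and> z < L - g" using below by (auto simp: N_def)
  then show ?thesis using cost h g z by (auto simp: N_def algebra_simps)
qed

lemma hrep_sub_farey:
  fixes a b q r i z k1 k2 :: int
  assumes a: "0 < a" and b: "b = q * a + r" and r: "0 \<le> r" "r < a" and q: "1 \<le> q"
    and z: "0 \<le> z" and iz: "i + z \<le> int h + 1" and h: "q + a - 2 \<le> int h"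
    and k1: "1 \<le> k1" and k2: "1 \<le> k2" and pair: "farey_pair a r k1 k2"
    and k1b: "k1 * b \<le> i * a + z" and below: "i * a + z < (k1 + k2) * b"
    and large: "z < (k2 * r) mod a"
  shows "hrep a b h (i * a + z - b)"
proof -
  define g where "g = a - (k1 * r) mod a"
  define L where "L = (k2 * r) mod a"
  define u where "u = (k1 * r) div a + 1"
  define v where "v = (k2 * r) div a"
  have g: "1 \<le> g" "g \<le> a"
    using pos_mod_bound[OF a, of "k1 * r"] pos_mod_sign[OF a, of "k1 * r"] by (auto simp: g_def)
  have L: "1 \<le> L" "L < a" using large z pos_mod_bound[OF a, of "k2 * r"] by (auto simp: L_def)
  have ua: "u * a = k1 * r + g"
    using div_mult_mod_eq[of "k1 * r" a] by (simp add: u_def g_def algebra_simps)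
  have va: "v * a = k2 * r - L"
    using div_mult_mod_eq[of "k2 * r" a] by (simp add: v_def L_def algebra_simps)
  have det: "g * k2 + L * k1 = a" using pair by (simp add: farey_pair_def g_def L_def)
  have "g * 1 + L * 1 \<le> g * k2 + L * k1"
    using g L k1 k2 by (intro add_mono mult_left_mono) auto
  then have g_L: "g + L \<le> a" using det by simp
  show ?thesis
  proof (rule hrep_sub_of_multiple[OF a k1 k1b])
    show "i * a + z - k1 * b = (i - k1 * q - u) * a + (z + g)"
      unfolding b using ua by (simp add: algebra_simps)
    show "0 \<le> z + g" "z + g < a" using z g large g_L by (auto simp: L_def)
    show "z + g + (i - k1 * q - u) + (k1 - 1) \<le> int h"
    proof (cases "g \<le> k1 * (q - 1) + u")
      case True
      then show ?thesis using iz by (simp add: algebra_simps)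
    next
      case False
      show ?thesis
      proof (rule farey_exchange_count[OF k1 k2 g(1) L q z(1) _ h det])
        show "z < L" using large by (simp add: L_def)
        show "u * k2 = 1 + v * k1"
          using farey_pair_quotients[OF a pair] by (simp add: u_def v_def)
        show "1 \<le> u" "0 \<le> v"
          using a k1 k2 r by (simp_all add: u_def v_def pos_imp_zdiv_nonneg_iff)
        show "u = 1" if "k1 = 1" using that r by (simp add: u_def)
        show "v = 0" if "k2 = 1" using that r by (simp add: v_def)
        show "k1 * (q - 1) + u < g" using False by simp
        have "(k1 + k2) * b = ((k1 + k2) * q + u + v) * a + L - g"
          unfolding b using ua va by (simp add: algebra_simps)
        then show "(i - ((k1 + k2) * q + u + v)) * a < L - g - z"
          using below by (simp add: algebra_simps)
      qed
    qed
  qed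
qed

lemma floor_quotient_bounds:
  fixes b y :: int
  assumes b: "0 < b" and yb: "b \<le> y"
  obtains K :: nat where "1 \<le> K" "int K * b \<le> y" "y < (int K + 1) * b"
proof
  show K: "1 \<le> nat (y div b)" using zdiv_mono1[OF yb b] b by simp
  then have K_eq: "int (nat (y div b)) = y div b" by simp
  have "y div b * b + y mod b = y" by (rule div_mult_mod_eq)
  then show "int (nat (y div b)) * b \<le> y" "y < (int (nat (y div b)) + 1) * b"
    using pos_mod_sign[OF b, of y] pos_mod_bound[OF b, of y]
    unfolding K_eq distrib_right by linarith+
qed

lemma hrep_sub_of_two_term:
  fixes a b i z :: int
  assumes a: "1 < a" and ab: "a < b" and h: "b div a + a - 2 \<le> int h"
    and z: "0 \<le> z" "z < a" and iz: "i + z \<le> int h + 1" and yb: "b \<le> i * a + z"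
  shows "hrep a b h (i * a + z - b)"
proof -
  define q where "q = b div a"
  define r where "r = b mod a"
  have a0: "0 < a" and b0: "0 < b" using a ab by auto
  have b: "b = q * a + r" by (simp add: q_def r_def)
  have r: "0 \<le> r" "r < a" using a0 by (auto simp: r_def)
  have q: "1 \<le> q" using zdiv_mono1[of a b a] a0 ab by (simp add: q_def)
  obtain K :: nat where K: "1 \<le> K" "int K * b \<le> i * a + z" "i * a + z < (int K + 1) * b"
    using floor_quotient_bounds[OF b0 yb] .
  have kb: "int k * b \<le> i * a + z" if "k \<le> K" for k
  proof -
    have "int k * b \<le> int K * b" using that b0 by (intro mult_right_mono) auto
    then show ?thesis using K(2) by simp
  qed
  show ?thesis
  proof (cases "\<exists>k::nat. 1 \<le> k \<and> k \<le> K \<and> (int k * r) mod a \<le> z")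
    case True
    then obtain k :: nat where "1 \<le> k" "k \<le> K" "(int k * r) mod a \<le> z" by blast
    then show ?thesis using hrep_sub_small_residue[OF a0 b r(1) q z(2) iz, of "int k"] kb[of k] by simp
  next
    case False
    then have large: "\<forall>k::nat. 1 \<le> k \<and> k \<le> K \<longrightarrow> z < (int k * r) mod a" by auto
    then have "\<forall>k::nat. 1 \<le> k \<and> k \<le> K \<longrightarrow> (int k * r) mod a \<noteq> 0" using z by fastforce
    then obtain k1 k2 :: nat where k: "1 \<le> k1" "k1 \<le> K" "1 \<le> k2" "k2 \<le> K" "K < k1 + k2"
      and pair: "farey_pair a r (int k1) (int k2)"
      using farey_neighbours[OF a0 K(1)] by blast
    have "(int K + 1) * b \<le> (int k1 + int k2) * b" using k b0 by (intro mult_right_mono) auto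
    then show ?thesis
      using hrep_sub_farey[OF a0 b r q z(1) iz _ _ _ pair] K h k large kb[of k1]
      by (simp add: q_def)
  qed
qed

lemma hrep_Suc_sub:
  fixes a b y :: int
  assumes a: "1 < a" and ab: "a < b" and h: "b div a + a - 2 \<le> int h"
    and rep: "hrep a b (Suc h) y" and yb: "b \<le> y"
  shows "hrep a b h (y - b)"
proof -
  obtain c1 c2 c3 :: int where c: "0 \<le> c1" "0 \<le> c2" "0 \<le> c3" "c1 + c2 + c3 \<le> int (Suc h)"
    and y: "y = c3 * b + c2 * a + c1" using hrepE[OF rep] by blast
  show ?thesis
  proof (cases "c3 = 0")
    case False
    show ?thesis
      by (rule hrep_intI[of c1 c2 "c3 - 1"]) (use c False y in \<open>auto simp: algebra_simps\<close>)
  next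
    case True
    have a0: "0 < a" using a by simp
    have "c1 div a * 1 \<le> c1 div a * a"
      using a0 c by (intro mult_left_mono) (auto simp: pos_imp_zdiv_nonneg_iff)
    then have "(c2 + c1 div a) + c1 mod a \<le> int h + 1"
      using c div_mult_mod_eq[of c1 a] by linarith
    moreover have "y = (c2 + c1 div a) * a + c1 mod a"
      using True y div_mult_mod_eq[of c1 a] by (simp add: algebra_simps)
    ultimately show ?thesis
      using hrep_sub_of_two_term[OF a ab h pos_mod_sign[OF a0] pos_mod_bound[OF a0]] yb by simp
  qed
qed

lemma Xh_eqI:
  fixes N :: int
  assumes "0 \<le> N" "\<And>n. 0 < n \<Longrightarrow> n \<le> N \<Longrightarrow> hrep a2 a3 h n" "\<not> hrep a2 a3 h (N + 1)"
  shows "Xh a2 a3 h = N"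
proof -
  have "(LEAST n::int. n > 0 \<and> \<not> hrep a2 a3 h n) = N + 1"
  proof (rule Least_equality)
    fix y assume "y > 0 \<and> \<not> hrep a2 a3 h y"
    then show "N + 1 \<le> y" using assms(2) by force
  qed (use assms in simp)
  then show ?thesis unfolding Xh_def by simp
qed

lemma Xh_spec:
  assumes "1 \<le> a2" "a2 \<le> a3"
  shows "0 \<le> Xh a2 a3 h" and "\<And>n. 0 < n \<Longrightarrow> n \<le> Xh a2 a3 h \<Longrightarrow> hrep a2 a3 h n"
    and "\<not> hrep a2 a3 h (Xh a2 a3 h + 1)"
proof -
  define P where "P m \<longleftrightarrow> 0 < m \<and> \<not> hrep a2 a3 h (int m)" for m
  have "P (Suc (nat (int h * a3)))"
    using hrep_le[OF assms, of h "int (Suc (nat (int h * a3)))"] by (auto simp: P_def)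
  then have Pm: "P (LEAST m. P m)" by (rule LeastI)
  define m where "m = (LEAST m. P m)"
  have below: "hrep a2 a3 h n" if "0 < n" "n \<le> int m - 1" for n
  proof -
    have "\<not> P (nat n)" unfolding m_def by (rule not_less_Least) (use that in \<open>simp add: m_def\<close>)
    then show ?thesis using that by (simp add: P_def)
  qed
  have X: "Xh a2 a3 h = int m - 1"
    by (rule Xh_eqI) (use Pm below in \<open>auto simp: P_def m_def\<close>)
  show "0 \<le> Xh a2 a3 h" "\<not> hrep a2 a3 h (Xh a2 a3 h + 1)"
    using Pm X by (auto simp: P_def m_def)
  show "\<And>n. 0 < n \<Longrightarrow> n \<le> Xh a2 a3 h \<Longrightarrow> hrep a2 a3 h n"
    using below X by simp
qed

lemma hrep_quotient_mult_pred_le: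
  fixes a b :: int
  assumes a: "1 < a" and ab: "a < b" and rep: "hrep a b h (b div a * a - 1)"
  shows "b div a + a - 2 \<le> int h"
proof -
  define q where "q = b div a"
  have a0: "0 < a" using a by simp
  have qa: "q * a \<le> b"
    using div_mult_mod_eq[of b a] pos_mod_sign[OF a0, of b] unfolding q_def by linarith
  obtain c1 c2 c3 :: int where c: "0 \<le> c1" "0 \<le> c2" "0 \<le> c3" "c1 + c2 + c3 \<le> int h"
    and y: "q * a - 1 = c3 * b + c2 * a + c1" using hrepE[OF rep] unfolding q_def by blast
  have "c3 = 0"
  proof (rule ccontr)
    assume "c3 \<noteq> 0"
    then have "1 * b \<le> c3 * b" using c ab a0 by (intro mult_right_mono) auto
    moreover have "0 \<le> c2 * a" using c a0 by simp
    ultimately show False using c y qa by simp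
  qed
  have "c2 \<le> q - 1"
  proof (rule ccontr)
    assume "\<not> c2 \<le> q - 1"
    then have "q * a \<le> c2 * a" using a0 by (intro mult_right_mono) auto
    then show False using c y \<open>c3 = 0\<close> by simp
  qed
  then have "0 \<le> (q - 1 - c2) * (a - 1)" using a by simp
  moreover have "(q - 1 - c2) * (a - 1) = c1 + c2 - (q + a - 2)"
    using y \<open>c3 = 0\<close> by (simp add: algebra_simps)
  ultimately show ?thesis using c \<open>c3 = 0\<close> by (simp add: q_def)
qed

lemma Xh_Suc:
  assumes a: "1 < a2" and ab: "a2 < a3" and h: "a3 div a2 + a2 - 2 \<le> int h"
    and X: "a3 \<le> Xh a2 a3 h"
  shows "Xh a2 a3 (Suc h) = Xh a2 a3 h + a3"
proof (rule Xh_eqI)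
  have a2_a3: "1 \<le> a2" "a2 \<le> a3" using a ab by auto
  note spec = Xh_spec[OF a2_a3, where h = h]
  show "0 \<le> Xh a2 a3 h + a3" using spec(1) a ab by simp
  show "\<not> hrep a2 a3 (Suc h) (Xh a2 a3 h + a3 + 1)"
    using hrep_Suc_sub[OF a ab h, of "Xh a2 a3 h + a3 + 1"] spec(1,3) a ab by auto
  fix n assume n: "0 < n" "n \<le> Xh a2 a3 h + a3"
  show "hrep a2 a3 (Suc h) n"
  proof (cases "n \<le> Xh a2 a3 h")
    case True
    then show ?thesis using spec(2) n hrep_mono[of a2 a3 h n] by simp
  next
    case False
    then have "hrep a2 a3 h (n - a3)" using spec(2)[of "n - a3"] n X by simp
    then show ?thesis using hrep_Suc_add by fastforce
  qed
qed

lemma a3_le_Xh_h0: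
  assumes a: "1 < a2" and ab: "a2 < a3"
  shows "a3 \<le> Xh a2 a3 (h0 a2 a3)"
proof -
  have a2_a3: "1 \<le> a2" "a2 \<le> a3" using a ab by auto
  have "a3 \<le> Xh a2 a3 (nat a3)"
  proof (rule ccontr)
    assume "\<not> a3 \<le> Xh a2 a3 (nat a3)"
    then have "hrep a2 a3 (nat a3) (Xh a2 a3 (nat a3) + 1)"
      using Xh_spec(1)[OF a2_a3] by (intro hrep_of_le) auto
    then show False using Xh_spec(3)[OF a2_a3] by blast
  qed
  then show ?thesis unfolding h0_def by (rule LeastI)
qed

lemma quotient_le_h0:
  assumes a: "1 < a2" and ab: "a2 < a3"
  shows "a3 div a2 + a2 - 2 \<le> int (h0 a2 a3)"
proof (rule hrep_quotient_mult_pred_le[OF a ab])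
  have "1 \<le> a3 div a2" using zdiv_mono1[of a2 a3 a2] a ab by simp
  then have "a2 \<le> a3 div a2 * a2" using a by (simp add: mult_le_cancel_right1)
  moreover have "a3 div a2 * a2 \<le> a3"
    using div_mult_mod_eq[of a3 a2] pos_mod_sign[of a2 a3] a by linarith
  ultimately show "hrep a2 a3 (h0 a2 a3) (a3 div a2 * a2 - 1)"
    using a3_le_Xh_h0[OF a ab] a ab by (intro Xh_spec(2)) linarith+
qed

lemma Xh_Suc_of_h0_le:
  assumes a: "1 < a2" and ab: "a2 < a3" and h: "h0 a2 a3 \<le> h"
  shows "a3 \<le> Xh a2 a3 h \<and> Xh a2 a3 (Suc h) = Xh a2 a3 h + a3"
  using h
proof (induction h rule: dec_induct)
  case base
  then show ?case using a3_le_Xh_h0[OF a ab] Xh_Suc[OF a ab quotient_le_h0[OF a ab]] by simp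
next
  case (step h)
  then have X: "a3 \<le> Xh a2 a3 (Suc h)" using a ab by simp
  have "a3 div a2 + a2 - 2 \<le> int (Suc h)" using quotient_le_h0[OF a ab] step(1) by simp
  then show ?case using X Xh_Suc[OF a ab _ X] by simp
qed

lemma P1_h0:
  assumes "1 < a2" "a2 < a3"
  shows "P1 a2 a3 (h0 a2 a3)"
  using Xh_Suc_of_h0_le[OF assms] by (simp add: P1_def)

lemma P2_h0:
  assumes a: "1 < a2" and ab: "a2 < a3"
  shows "P2 a2 a3 (h0 a2 a3)"
  unfolding P2_def
proof (intro conjI allI impI)
  show "h1 a2 a3 \<le> h0 a2 a3" unfolding h1_def by (rule Least_le) (rule P1_h0[OF a ab])
  fix h x assume h: "h0 a2 a3 \<le> h" and x: "Xh a2 a3 h < x \<and> x < int h * a3"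
  have "a3 div a2 + a2 - 2 \<le> int h" using quotient_le_h0[OF a ab] h by simp
  then have "hrep a2 a3 h x" if "hrep a2 a3 (Suc h) (x + a3)"
    using hrep_Suc_sub[OF a ab _ that] Xh_spec(1)[of a2 a3 h] a ab x by simp
  then show "\<not> hrep a2 a3 h x \<longleftrightarrow> \<not> hrep a2 a3 (h + 1) (x + a3)"
    using hrep_Suc_add[of a2 a3 h x] by auto
qed

theorem mainTheorem8:
  fixes a2 a3 :: int
  assumes "1 < a2" and "a2 < a3"
  shows "(\<exists>h. P1 a2 a3 h) \<and> (\<exists>h. P2 a2 a3 h) \<and> h2 a2 a3 \<le> h0 a2 a3"
proof -
  have "P2 a2 a3 (h0 a2 a3)" by (rule P2_h0[OF assms])
  moreover from this have "h2 a2 a3 \<le> h0 a2 a3" unfolding h2_def by (rule Least_le)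
  ultimately show ?thesis using P1_h0[OF assms] by blast
qed

end
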